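(* Let $\mathcal{U}$ be a separable Banach space with dual $\mathcal{U}^*$ and pairing $[\cdot,\cdot]$, with quadratic norm $\|u\|^2=[\mathcal{K}^{-1}u,u]$ for an invertible symmetric positive linear $\mathcal{K}:\mathcal{U}^*\to\mathcal{U}$. Let $\Omega\subseteq\mathbb{R}^d$ be bounded and consider the PDE $\mathcal{P}(u)=f$ in $\Omega$, $\mathcal{B}(u)=g$ on $\partial\Omega$, where there exist bounded linear $L_1,\dots,L_Q\in\mathcal{L}(\mathcal{U};C(\Omega))$ with $L_1,\dots,L_{Q_b}\in\mathcal{L}(\mathcal{U};C(\partial\Omega))$ ($1\le Q_b\le Q$) and maps $P:\mathbb{R}^Q\to\mathbb{R}$, $B:\mathbb{R}^{Q_b}\to\mathbb{R}$ with $\mathcal{P}(u)(\mathbf{x})=P(L_1(u)(\mathbf{x}),\dots,L_Q(u)(\mathbf{x}))$ on $\Omega$ and $\mathcal{B}(u)(\mathbf{x})=B(L_1(u)(\mathbf{x}),\dots,L_{Q_b}(u)(\mathbf{x}))$ on $\partial\Omega$. With $\boldsymbol{\phi}$, $N$, $\mathbf{y}$, $F$, $\Theta$, $\chi_n$ as in the context, assume $\Theta$ is invertible, and assume there is a map $\overline{F}:\mathbb{R}^{N-M}\times\mathbb{R}^M\to\mathbb{R}^N$ such that $F(\mathbf{z})=\mathbf{y}$ if and only if $\mathbf{z}=\overline{F}(\mathbf{w},\mathbf{y})$ for a unique $\mathbf{w}\in\mathbb{R}^{N-M}$. Then $u^\dagger$ is a minimizer of $$\min_{u\in\mathcal{U}}\|u\|\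 \text{ s.t. }\ \mathcal{P}(u)(\mathbf{x}_m)=f(\mathbf{x}_m),\ 1\le m\le M_\Omega;\quad\mathcal{B}(u)(\mathbf{x}_m)=g(\mathbf{x}_m),\ M_\Omega<m\le M,$$ if and only if $u^\dagger=\sum_{n=1}^N z^\dagger_n\chi_n$ with $\mathbf{z}^\dagger=\overline{F}(\mathbf{w}^\dagger,\mathbf{y})$, where $\mathbf{w}^\dagger\in\mathbb{R}^{N-M}$ is a minimizer of $\min_{\mathbf{w}\in\mathbb{R}^{N-M}}\overline{F}(\mathbf{w},\mathbf{y})^T\Theta^{-1}\overline{F}(\mathbf{w},\mathbf{y})$.
   Context: Collocation points $\mathbf{x}_1,\dots,\mathbf{x}_{M_\Omega}\in\Omega$, $\mathbf{x}_{M_\Omega+1},\dots,\mathbf{x}_M\in\partial\Omega$. $\phi^{(q)}_m=\delta_{\mathbf{x}_m}\circ L_q$ for $1\le m\le M$ if $q\le Q_b$ and for $1\le m\le M_\Omega$ if $q>Q_b$; $\boldsymbol{\phi}=(\boldsymbol{\phi}^{(1)},\dots,\boldsymbol{\phi}^{(Q)})\in(\mathcal{U}^* )^N$, $N=MQ_b+M_\Omega(Q-Q_b)$. $y_m=f(\mathbf{x}_m)$ for $m\le M_\Omega$, $y_m=g(\mathbf{x}_m)$ otherwise. $F:\mathbb{R}^N\to\mathbb{R}^M$, $(F([\boldsymbol{\phi},u]))_m=P([\phi^{(1)}_m,u],\dots,[\phi^{(Q)}_m,u])$ for $m\le M_\Omega$ and $B([\phi^{(1)}_m,u],\dots,[\phi^{(Q_b)}_m,u])$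 for $m>M_\Omega$. $\Theta_{i,n}=[\phi_i,\mathcal{K}\phi_n]$ over the entries $\phi_i$ of $\boldsymbol{\phi}$; $\chi_i=\sum_n(\Theta^{-1})_{i,n}\mathcal{K}\phi_n$. (The map $\overline{F}$ arises when the equations $P(v_1,\dots,v_Q)=y$ and $B(v_1,\dots,v_{Q_b})=y$ can be solved explicitly for one selected variable each.) *)

theory Defs
  imports "HOL-Analysis.Analysis"
begin

text \<open>Operators L q (q = 1..Q), collocation points x m (m = 1..M) are 1-indexed.
Finite-dimensional vectors (z in R^N, w in R^(N-M), y in R^M) are real lists (0-indexed).
The vector phi = (phi^(1),...,phi^(Q)) is the concatenation of Q blocks; block q has
M entries if q <= Qb and M_Omega entries otherwise.\<close>

definition blocksize :: "nat \<Rightarrow> nat \<Rightarrow> nat \<Rightarrow> nat \<Rightarrow> nat" where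
  "blocksize Qb M MO q = (if q \<le> Qb then M else MO)"

definition block_offset :: "nat \<Rightarrow> nat \<Rightarrow> nat \<Rightarrow> nat \<Rightarrow> nat" where
  "block_offset Qb M MO q = (\<Sum>q'\<in>{1..<q}. blocksize Qb M MO q')"

definition num_meas :: "nat \<Rightarrow> nat \<Rightarrow> nat \<Rightarrow> nat \<Rightarrow> nat" where
  "num_meas Q Qb M MO = M * Qb + MO * (Q - Qb)"

definition phi_entry :: "(nat \<Rightarrow> 'u::real_normed_vector \<Rightarrow> 'x \<Rightarrow> real) \<Rightarrow> (nat \<Rightarrow> 'x) \<Rightarrow> nat \<Rightarrow> nat \<Rightarrow> ('u \<Rightarrow>\<^sub>L real)" where
  "phi_entry L x q m = Blinfun (\<lambda>u. L q u (x m))"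

definition phi_list :: "(nat \<Rightarrow> 'u::real_normed_vector \<Rightarrow> 'x \<Rightarrow> real) \<Rightarrow> (nat \<Rightarrow> 'x) \<Rightarrow> nat \<Rightarrow> nat \<Rightarrow> nat \<Rightarrow> nat \<Rightarrow> ('u \<Rightarrow>\<^sub>L real) list" where
  "phi_list L x Q Qb M MO =
     concat (map (\<lambda>q. map (\<lambda>m. phi_entry L x q m) [1..<blocksize Qb M MO q + 1]) [1..<Q + 1])"

definition data_vec :: "('x \<Rightarrow> real) \<Rightarrow> ('x \<Rightarrow> real) \<Rightarrow> (nat \<Rightarrow> 'x) \<Rightarrow> nat \<Rightarrow> nat \<Rightarrow> real list" where
  "data_vec f g x M MO = map (\<lambda>m. if m \<le> MO then f (x m) else g (x m)) [1..<M + 1]"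

text \<open>The map F : R^N -> R^M; z is read with the same block structure as phi\<close>
definition Fmap :: "(real list \<Rightarrow> real) \<Rightarrow> (real list \<Rightarrow> real) \<Rightarrow> nat \<Rightarrow> nat \<Rightarrow> nat \<Rightarrow> nat \<Rightarrow> real list \<Rightarrow> real list" where
  "Fmap P B Q Qb M MO z =
     map (\<lambda>m. if m \<le> MO
               then P (map (\<lambda>q. z ! (block_offset Qb M MO q + (m - 1))) [1..<Q + 1])
               else B (map (\<lambda>q. z ! (block_offset Qb M MO q + (m - 1))) [1..<Qb + 1]))
         [1..<M + 1]"

definition Theta :: "(('u::real_normed_vector \<Rightarrow>\<^sub>L real) \<Rightarrow> 'u) \<Rightarrow> ('u \<Rightarrow>\<^sub>L real) list \<Rightarrow> nat \<Rightarrow> nat \<Rightarrow> real" where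
  "Theta K phis i n = blinfun_apply (phis ! i) (K (phis ! n))"

text \<open>Square matrices of size n as functions nat => nat => real with indices < n\<close>
definition is_inverse_mat :: "nat \<Rightarrow> (nat \<Rightarrow> nat \<Rightarrow> real) \<Rightarrow> (nat \<Rightarrow> nat \<Rightarrow> real) \<Rightarrow> bool" where
  "is_inverse_mat n A Ai \<longleftrightarrow>
     (\<forall>i<n. \<forall>j<n. (\<Sum>k<n. A i k * Ai k j) = (if i = j then 1 else 0)) \<and>
     (\<forall>i<n. \<forall>j<n. (\<Sum>k<n. Ai i k * A k j) = (if i = j then 1 else 0))"

definition invertible_sq_mat :: "nat \<Rightarrow> (nat \<Rightarrow> nat \<Rightarrow> real) \<Rightarrow> bool" where
  "invertible_sq_mat n A \<longleftrightarrow> (\<exists>Ai. is_inverse_mat n A Ai)"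

definition inv_sq_mat :: "nat \<Rightarrow> (nat \<Rightarrow> nat \<Rightarrow> real) \<Rightarrow> (nat \<Rightarrow> nat \<Rightarrow> real)" where
  "inv_sq_mat n A = (SOME Ai. is_inverse_mat n A Ai)"

definition chi :: "(('u::real_normed_vector \<Rightarrow>\<^sub>L real) \<Rightarrow> 'u) \<Rightarrow> ('u \<Rightarrow>\<^sub>L real) list \<Rightarrow> nat \<Rightarrow> 'u" where
  "chi K phis i = (let N = length phis; Ti = inv_sq_mat N (Theta K phis) in
                     (\<Sum>n<N. Ti i n *\<^sub>R K (phis ! n)))"

definition quad_form :: "nat \<Rightarrow> (nat \<Rightarrow> nat \<Rightarrow> real) \<Rightarrow> real list \<Rightarrow> real" where
  "quad_form n A z = (\<Sum>i<n. \<Sum>j<n. z ! i * A i j * z ! j)"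

end

theory Submission
  imports Defs
begin

text \<open>Write \<open>z = [\<phi>, u]\<close> for the measurements of \<open>u\<close> and \<open>v z = \<Sum>n. z\<^sub>n \<chi>\<^sub>n\<close>.
  Because \<open>[\<phi>\<^sub>i, \<chi>\<^sub>n] = \<delta>\<^sub>i\<^sub>n\<close>, \<open>v z\<close> reproduces the measurements \<open>z\<close>, and because
  \<open>inv K (v z)\<close> lies in the span of the \<open>\<phi>\<^sub>n\<close>, every \<open>u\<close> splits orthogonally as
  \<open>\<parallel>u\<parallel>\<^sup>2 = \<parallel>v [\<phi>, u]\<parallel>\<^sup>2 + \<parallel>u - v [\<phi>, u]\<parallel>\<^sup>2\<close>, where \<open>\<parallel>v z\<parallel>\<^sup>2 = z\<^sup>T \<Theta>\<^sup>-\<^sup>1 z\<close>.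
  The collocation constraints see \<open>u\<close> only through \<open>[\<phi>, u]\<close>, and they hold exactly when
  \<open>[\<phi>, u] = Fbar w y\<close> for some \<open>w\<close>. So a minimiser must coincide with the interpolant of
  its own measurements, and minimising \<open>\<parallel>u\<parallel>\<close> becomes minimising \<open>z\<^sup>T \<Theta>\<^sup>-\<^sup>1 z\<close> over
  \<open>z = Fbar w y\<close>.\<close>

lemma is_inverse_mat_inv_sq_mat:
  "invertible_sq_mat n A \<Longrightarrow> is_inverse_mat n A (inv_sq_mat n A)"
  unfolding invertible_sq_mat_def inv_sq_mat_def by (metis someI_ex)

definition measurements :: "('u::real_normed_vector \<Rightarrow>\<^sub>L real) list \<Rightarrow> 'u \<Rightarrow> real list" where
  "measurements phis u = map (\<lambda>\<phi>. blinfun_apply \<phi> u) phis"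

definition interpolant :: "(('u::real_normed_vector \<Rightarrow>\<^sub>L real) \<Rightarrow> 'u) \<Rightarrow> ('u \<Rightarrow>\<^sub>L real) list \<Rightarrow> real list \<Rightarrow> 'u" where
  "interpolant K phis z = (\<Sum>n<length phis. z ! n *\<^sub>R chi K phis n)"

definition interpolant_functional ::
    "(('u::real_normed_vector \<Rightarrow>\<^sub>L real) \<Rightarrow> 'u) \<Rightarrow> ('u \<Rightarrow>\<^sub>L real) list \<Rightarrow> real list \<Rightarrow> 'u \<Rightarrow>\<^sub>L real" where
  "interpolant_functional K phis z =
     (\<Sum>k<length phis. (\<Sum>n<length phis. z ! n * inv_sq_mat (length phis) (Theta K phis) n k)
                         *\<^sub>R phis ! k)"

lemma length_measurements [simp]: "length (measurements phis u) = length phis"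
  by (simp add: measurements_def)

lemma interpolant_eq_K_functional:
  assumes "linear K"
  shows "interpolant K phis z = K (interpolant_functional K phis z)"
proof -
  let ?N = "length phis" and ?Ti = "inv_sq_mat (length phis) (Theta K phis)"
  have "K (interpolant_functional K phis z) = (\<Sum>k<?N. \<Sum>n<?N. z ! n *\<^sub>R ?Ti n k *\<^sub>R K (phis ! k))"
    by (simp add: interpolant_functional_def linear_sum[OF assms] linear_cmul[OF assms]
        scaleR_sum_left)
  also have "\<dots> = (\<Sum>n<?N. \<Sum>k<?N. z ! n *\<^sub>R ?Ti n k *\<^sub>R K (phis ! k))"
    by (rule sum.swap)
  also have "\<dots> = interpolant K phis z"
    by (simp add: interpolant_def chi_def Let_def scaleR_sum_right)
  finally show ?thesis by simp
qed

lemma interpolant_functional_apply: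
  "blinfun_apply (interpolant_functional K phis z) u =
     (\<Sum>k<length phis. (\<Sum>n<length phis. z ! n * inv_sq_mat (length phis) (Theta K phis) n k)
                        * blinfun_apply (phis ! k) u)"
  by (simp add: interpolant_functional_def blinfun.sum_left blinfun.scaleR_left)

lemma min_norm_iff_min_cost_interpolant:
  fixes meas :: "'u::real_normed_vector \<Rightarrow> 'z" and V :: "'z \<Rightarrow> 'u"
  assumes meas_V: "\<And>z. z \<in> Z \<Longrightarrow> meas (V z) = z"
    and decomp: "\<And>u. (norm u)\<^sup>2 = (norm (V (meas u)))\<^sup>2 + (norm (u - V (meas u)))\<^sup>2"
    and cost: "\<And>z. z \<in> Z \<Longrightarrow> (norm (V z))\<^sup>2 = cost z"
  shows "(meas u \<in> Z \<and> (\<forall>u'. meas u' \<in> Z \<longrightarrow> norm u \<le> norm u')) \<longleftrightarrow>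
         (\<exists>z\<in>Z. (\<forall>z'\<in>Z. cost z \<le> cost z') \<and> u = V z)"
proof -
  have norm_V_le: "norm (V (meas u')) \<le> norm u'" for u'
  proof (rule power2_le_imp_le)
    show "(norm (V (meas u')))\<^sup>2 \<le> (norm u')\<^sup>2"
      using decomp[of u'] zero_le_power2[of "norm (u' - V (meas u'))"] by linarith
  qed simp
  have cost_le_iff: "cost z \<le> cost z' \<longleftrightarrow> norm (V z) \<le> norm (V z')" if "z \<in> Z" "z' \<in> Z" for z z'
    using that by (simp flip: cost add: power_mono_iff)
  show ?thesis
  proof
    assume "meas u \<in> Z \<and> (\<forall>u'. meas u' \<in> Z \<longrightarrow> norm u \<le> norm u')"
    then have Z: "meas u \<in> Z" and min: "\<And>u'. meas u' \<in> Z \<Longrightarrow> norm u \<le> norm u'"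
      by blast+
    have "norm u \<le> norm (V (meas u))"
      using min meas_V[OF Z] Z by simp
    then have "(norm u)\<^sup>2 \<le> (norm (V (meas u)))\<^sup>2"
      by (simp add: power_mono)
    then have "u = V (meas u)"
      using decomp[of u] by simp
    moreover have "cost (meas u) \<le> cost z'" if "z' \<in> Z" for z'
      using min[of "V z'"] meas_V[OF that] cost_le_iff[OF Z that] \<open>u = V (meas u)\<close> that by simp
    ultimately show "\<exists>z\<in>Z. (\<forall>z'\<in>Z. cost z \<le> cost z') \<and> u = V z"
      using Z by blast
  next
    assume "\<exists>z\<in>Z. (\<forall>z'\<in>Z. cost z \<le> cost z') \<and> u = V z"
    then obtain z where z: "z \<in> Z" "\<And>z'. z' \<in> Z \<Longrightarrow> cost z \<le> cost z'" and u: "u = V z"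
      by blast
    have "norm u \<le> norm u'" if "meas u' \<in> Z" for u'
    proof -
      have "norm u \<le> norm (V (meas u'))"
        using z(2)[OF that] cost_le_iff[OF z(1) that] u by simp
      then show ?thesis
        using norm_V_le[of u'] by linarith
    qed
    then show "meas u \<in> Z \<and> (\<forall>u'. meas u' \<in> Z \<longrightarrow> norm u \<le> norm u')"
      using z(1) u meas_V by simp
  qed
qed

context
  fixes K :: "('u::real_normed_vector \<Rightarrow>\<^sub>L real) \<Rightarrow> 'u" and phis :: "('u \<Rightarrow>\<^sub>L real) list"
  assumes K_linear: "linear K"
    and K_symm: "\<forall>\<phi> \<psi>. blinfun_apply \<phi> (K \<psi>) = blinfun_apply \<psi> (K \<phi>)"
    and Theta_inv: "invertible_sq_mat (length phis) (Theta K phis)"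
begin

lemma interpolant_interpolates:
  assumes "i < length phis"
  shows "blinfun_apply (phis ! i) (interpolant K phis z) = z ! i"
proof -
  let ?N = "length phis" and ?Ti = "inv_sq_mat (length phis) (Theta K phis)"
  have left_inv: "(\<Sum>k<?N. ?Ti n k * Theta K phis k i) = (if n = i then 1 else 0)" if "n < ?N" for n
    using is_inverse_mat_inv_sq_mat[OF Theta_inv] that assms unfolding is_inverse_mat_def by blast
  have "blinfun_apply (phis ! i) (interpolant K phis z)
      = blinfun_apply (interpolant_functional K phis z) (K (phis ! i))"
    using K_symm by (simp add: interpolant_eq_K_functional[OF K_linear])
  also have "\<dots> = (\<Sum>k<?N. \<Sum>n<?N. z ! n * ?Ti n k * Theta K phis k i)"
    by (simp add: interpolant_functional_apply Theta_def sum_distrib_right)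
  also have "\<dots> = (\<Sum>n<?N. z ! n * (\<Sum>k<?N. ?Ti n k * Theta K phis k i))"
    by (subst sum.swap) (simp add: sum_distrib_left mult.assoc)
  also have "\<dots> = (\<Sum>n<?N. z ! n * (if n = i then 1 else 0))"
    using left_inv by (intro sum.cong) auto
  also have "\<dots> = z ! i"
    using assms by (simp add: if_distrib cong: if_cong)
  finally show ?thesis .
qed

lemma measurements_interpolant:
  "length z = length phis \<Longrightarrow> measurements phis (interpolant K phis z) = z"
  unfolding measurements_def by (intro nth_equalityI) (simp_all add: interpolant_interpolates)

context
  assumes K_bij: "bij K" and norm_K: "\<forall>u. (norm u)\<^sup>2 = blinfun_apply (inv K u) u"
begin

lemma inv_K_interpolant: "inv K (interpolant K phis z) = interpolant_functional K phis z"
  using K_bij by (simp add: interpolant_eq_K_functional[OF K_linear] bij_is_inj)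

lemma norm_interpolant_sq:
  assumes "length z = length phis"
  shows "(norm (interpolant K phis z))\<^sup>2 = quad_form (length phis) (inv_sq_mat (length phis) (Theta K phis)) z"
proof -
  let ?N = "length phis" and ?Ti = "inv_sq_mat (length phis) (Theta K phis)"
  have "(norm (interpolant K phis z))\<^sup>2
      = blinfun_apply (interpolant_functional K phis z) (interpolant K phis z)"
    using norm_K by (simp add: inv_K_interpolant)
  also have "\<dots> = (\<Sum>k<?N. (\<Sum>n<?N. z ! n * ?Ti n k) * z ! k)"
    unfolding interpolant_functional_apply by (intro sum.cong refl) (simp add: interpolant_interpolates)
  also have "\<dots> = quad_form ?N ?Ti z"
    unfolding quad_form_def by (simp add: sum_distrib_right) (rule sum.swap)
  finally show ?thesis .
qed

text \<open>The residual \<open>e\<close> vanishes on every \<open>phis ! k\<close>, hence on \<open>\<psi> = inv K v\<close>; by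
  symmetry of \<open>K\<close> also \<open>inv K e\<close> vanishes on \<open>v = K \<psi>\<close>, so both cross terms drop out.\<close>
lemma norm_sq_interpolant_residual:
  fixes u :: 'u
  defines "v \<equiv> interpolant K phis (measurements phis u)"
  shows "(norm u)\<^sup>2 = (norm v)\<^sup>2 + (norm (u - v))\<^sup>2"
proof -
  define e where "e = u - v"
  define \<psi> where "\<psi> = interpolant_functional K phis (measurements phis u)"
  have "blinfun_apply (phis ! k) e = 0" if "k < length phis" for k
    using that by (simp add: e_def v_def blinfun.diff_right interpolant_interpolates measurements_def)
  then have \<psi>_e: "blinfun_apply \<psi> e = 0"
    by (simp add: \<psi>_def interpolant_functional_apply)
  have v_K: "v = K \<psi>"
    by (simp add: v_def \<psi>_def interpolant_eq_K_functional[OF K_linear])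
  have K_inv_e: "K (inv K e) = e"
    using K_bij by (simp add: bij_is_surj surj_f_inv_f)
  have u_eq: "u = v + e"
    by (simp add: e_def)
  have "K (\<psi> + inv K e) = u"
    by (simp add: linear_add[OF K_linear] K_inv_e v_K u_eq)
  then have inv_K_u: "inv K u = \<psi> + inv K e"
    using K_bij by (metis bij_is_inj inv_f_f)
  have cross: "blinfun_apply (inv K e) v = 0"
    using K_symm K_inv_e \<psi>_e v_K by metis
  have "(norm u)\<^sup>2 = blinfun_apply (\<psi> + inv K e) (v + e)"
    using norm_K inv_K_u u_eq by metis
  also have "\<dots> = blinfun_apply \<psi> v + blinfun_apply (inv K e) e"
    by (simp add: blinfun.add_left blinfun.add_right \<psi>_e cross)
  also have "\<dots> = (norm v)\<^sup>2 + (norm e)\<^sup>2"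
    using norm_K by (simp add: v_def \<psi>_def inv_K_interpolant)
  finally show ?thesis by (simp add: e_def)
qed

lemma min_norm_iff_min_quad_form:
  assumes "\<And>z. z \<in> Z \<Longrightarrow> length z = length phis"
  shows "(measurements phis u \<in> Z \<and> (\<forall>u'. measurements phis u' \<in> Z \<longrightarrow> norm u \<le> norm u')) \<longleftrightarrow>
    (\<exists>z\<in>Z. (\<forall>z'\<in>Z. quad_form (length phis) (inv_sq_mat (length phis) (Theta K phis)) z
                    \<le> quad_form (length phis) (inv_sq_mat (length phis) (Theta K phis)) z')
           \<and> u = interpolant K phis z)"
proof (rule min_norm_iff_min_cost_interpolant)
  show "measurements phis (interpolant K phis z) = z" if "z \<in> Z" for z
    using measurements_interpolant[OF assms[OF that]] .
  show "(norm (interpolant K phis z))\<^sup>2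
      = quad_form (length phis) (inv_sq_mat (length phis) (Theta K phis)) z" if "z \<in> Z" for z
    using norm_interpolant_sq[OF assms[OF that]] .
qed (rule norm_sq_interpolant_residual)

end

end

lemma length_concat_blocks:
  assumes "\<And>q. length (f q) = bs q"
  shows "length (concat (map f [1..<Q + 1])) = (\<Sum>q\<in>{1..Q}. bs q)"
  by (simp add: length_concat assms atLeastLessThanSuc_atLeastAtMost
      flip: sum_set_upt_conv_sum_list_nat del: upt_Suc)

lemma block_index_less_sum:
  fixes bs :: "nat \<Rightarrow> nat"
  assumes "q \<in> {1..Q}" and "j < bs q"
  shows "(\<Sum>q'\<in>{1..<q}. bs q') + j < (\<Sum>q'\<in>{1..Q}. bs q')"
proof -
  have "{1..Q} = {1..<q} \<union> {q..Q}"
    using assms(1) by auto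
  then have "(\<Sum>q'\<in>{1..Q}. bs q') = (\<Sum>q'\<in>{1..<q}. bs q') + (\<Sum>q'\<in>{q..Q}. bs q')"
    by (simp add: sum.union_disjoint[symmetric] ivl_disj_int)
  moreover have "bs q \<le> (\<Sum>q'\<in>{q..Q}. bs q')"
    using assms(1) by (intro member_le_sum) auto
  ultimately show ?thesis
    using assms(2) by linarith
qed

lemma nth_concat_blocks:
  assumes len: "\<And>q. length (f q) = bs q"
  shows "q \<in> {1..Q} \<Longrightarrow> j < bs q \<Longrightarrow>
    concat (map f [1..<Q + 1]) ! ((\<Sum>q'\<in>{1..<q}. bs q') + j) = f q ! j"
proof (induction Q)
  case 0
  then show ?case by simp
next
  case (Suc Q)
  have split: "concat (map f [1..<Suc Q + 1]) = concat (map f [1..<Q + 1]) @ f (Q + 1)"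
    by simp
  have len_init: "length (concat (map f [1..<Q + 1])) = (\<Sum>q'\<in>{1..Q}. bs q')"
    using len by (rule length_concat_blocks)
  show ?case
  proof (cases "q \<le> Q")
    case True
    then have "(\<Sum>q'\<in>{1..<q}. bs q') + j < length (concat (map f [1..<Q + 1]))"
      using block_index_less_sum[of q Q j bs] Suc.prems len_init by simp
    then show ?thesis
      using Suc True unfolding split nth_append by simp
  next
    case False
    then have "q = Q + 1"
      using Suc.prems by simp
    moreover have "{1..<Q + 1} = {1..Q}"
      by auto
    ultimately show ?thesis
      unfolding split nth_append using len_init by simp
  qed
qed

lemma sum_blocksize:
  assumes "Qb \<le> Q"
  shows "(\<Sum>q\<in>{1..Q}. blocksize Qb M MO q) = num_meas Q Qb M MO"
proof -
  have split: "{1..Q} = {1..Qb} \<union> {Qb<..Q}"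
    using assms by auto
  have "(\<Sum>q\<in>{1..Q}. blocksize Qb M MO q)
      = (\<Sum>q\<in>{1..Qb}. blocksize Qb M MO q) + (\<Sum>q\<in>{Qb<..Q}. blocksize Qb M MO q)"
    unfolding split by (rule sum.union_disjoint) auto
  also have "\<dots> = (\<Sum>q\<in>{1..Qb}. M) + (\<Sum>q\<in>{Qb<..Q}. MO)"
    by (simp add: blocksize_def)
  finally show ?thesis
    by (simp add: num_meas_def)
qed

lemma
  fixes L :: "nat \<Rightarrow> 'u::real_normed_vector \<Rightarrow> 'x \<Rightarrow> real" and x :: "nat \<Rightarrow> 'x"
    and Q Qb M MO :: nat
  defines "blocks \<equiv> \<lambda>q. map (phi_entry L x q) [1..<blocksize Qb M MO q + 1]"
  shows length_phi_list_sum: "length (phi_list L x Q Qb M MO) = (\<Sum>q\<in>{1..Q}. blocksize Qb M MO q)"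
    and nth_phi_list: "q \<in> {1..Q} \<Longrightarrow> m \<in> {1..blocksize Qb M MO q} \<Longrightarrow>
      phi_list L x Q Qb M MO ! (block_offset Qb M MO q + (m - 1)) = phi_entry L x q m"
proof -
  have len: "length (blocks q) = blocksize Qb M MO q" for q
    by (simp add: blocks_def)
  have phi_list_eq: "phi_list L x Q Qb M MO = concat (map blocks [1..<Q + 1])"
    by (simp add: phi_list_def blocks_def del: upt_Suc)
  show "length (phi_list L x Q Qb M MO) = (\<Sum>q\<in>{1..Q}. blocksize Qb M MO q)"
    unfolding phi_list_eq by (rule length_concat_blocks[OF len])
  show "phi_list L x Q Qb M MO ! (block_offset Qb M MO q + (m - 1)) = phi_entry L x q m"
    if "q \<in> {1..Q}" "m \<in> {1..blocksize Qb M MO q}"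
    using that unfolding phi_list_eq block_offset_def
    by (subst nth_concat_blocks[OF len]) (auto simp: blocks_def simp del: upt_Suc)
qed

lemma length_phi_list: "Qb \<le> Q \<Longrightarrow> length (phi_list L x Q Qb M MO) = num_meas Q Qb M MO"
  unfolding length_phi_list_sum by (rule sum_blocksize)

lemma block_offset_less_length_phi_list:
  assumes "q \<in> {1..Q}" and "m \<in> {1..blocksize Qb M MO q}"
  shows "block_offset Qb M MO q + (m - 1) < length (phi_list L x Q Qb M MO)"
proof -
  have "m - 1 < blocksize Qb M MO q"
    using assms(2) by auto
  from block_index_less_sum[where bs = "blocksize Qb M MO", OF assms(1) this] show ?thesis
    unfolding length_phi_list_sum block_offset_def .
qed

lemma measurements_phi_list_nth:
  assumes "bounded_linear (\<lambda>u. L q u (x m))"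
    and "q \<in> {1..Q}" and "m \<in> {1..blocksize Qb M MO q}"
  shows "measurements (phi_list L x Q Qb M MO) u ! (block_offset Qb M MO q + (m - 1)) = L q u (x m)"
  using assms nth_phi_list[OF assms(2,3), where L = L and x = x]
    block_offset_less_length_phi_list[OF assms(2,3), where L = L and x = x]
  by (simp add: measurements_def phi_entry_def bounded_linear_Blinfun_apply)

lemma bounded_linear_at_collocation_point:
  fixes L :: "nat \<Rightarrow> 'u::real_normed_vector \<Rightarrow> 'x \<Rightarrow> real"
  assumes L_linear: "\<forall>q\<in>{1..Q}. \<forall>z. linear (\<lambda>u. L q u z)"
    and L_bdd: "\<forall>q\<in>{1..Q}. \<exists>C. \<forall>u. \<forall>z\<in>\<Omega>. \<bar>L q u z\<bar> \<le> C * norm u"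
    and L_bdd_bdry: "\<forall>q\<in>{1..Qb}. \<exists>C. \<forall>u. \<forall>z\<in>\<Gamma>. \<bar>L q u z\<bar> \<le> C * norm u"
    and x_int: "\<forall>m\<in>{1..MO}. x m \<in> \<Omega>"
    and x_bdry: "\<forall>m\<in>{MO<..M}. x m \<in> \<Gamma>"
    and q: "q \<in> {1..Q}" and m: "m \<in> {1..blocksize Qb M MO q}"
  shows "bounded_linear (\<lambda>u. L q u (x m))"
proof -
  have "\<exists>C. \<forall>u. \<bar>L q u (x m)\<bar> \<le> C * norm u"
  proof (cases "m \<le> MO")
    case True
    then show ?thesis
      using x_int m L_bdd q by fastforce
  next
    case False
    then have "q \<le> Qb" and "m \<le> M"
      using m by (auto simp: blocksize_def split: if_splits)
    then show ?thesis
      using x_bdry False m L_bdd_bdry q by fastforce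
  qed
  then show ?thesis
    using L_linear q unfolding bounded_linear_def bounded_linear_axioms_def
    by (auto simp: mult.commute)
qed

lemma collocation_constraints_iff_Fmap:
  fixes L :: "nat \<Rightarrow> 'u::real_normed_vector \<Rightarrow> 'x \<Rightarrow> real"
  assumes "Qb \<le> Q" and "MO \<le> M"
    and bounded: "\<And>q m. q \<in> {1..Q} \<Longrightarrow> m \<in> {1..blocksize Qb M MO q} \<Longrightarrow> bounded_linear (\<lambda>u. L q u (x m))"
    and PDE_P_def: "\<forall>u. \<forall>z\<in>\<Omega>. PDE_P u z = P (map (\<lambda>q. L q u z) [1..<Q + 1])"
    and PDE_B_def: "\<forall>u. \<forall>z\<in>\<Gamma>. PDE_B u z = B (map (\<lambda>q. L q u z) [1..<Qb + 1])"
    and x_int: "\<forall>m\<in>{1..MO}. x m \<in> \<Omega>"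
    and x_bdry: "\<forall>m\<in>{MO<..M}. x m \<in> \<Gamma>"
  shows "((\<forall>m\<in>{1..MO}. PDE_P u (x m) = f (x m)) \<and> (\<forall>m\<in>{MO<..M}. PDE_B u (x m) = g (x m)))
     \<longleftrightarrow> Fmap P B Q Qb M MO (measurements (phi_list L x Q Qb M MO) u) = data_vec f g x M MO"
proof -
  define z where "z = measurements (phi_list L x Q Qb M MO) u"
  have z_nth: "z ! (block_offset Qb M MO q + (m - 1)) = L q u (x m)"
    if "q \<in> {1..Q}" "m \<in> {1..blocksize Qb M MO q}" for q m
    unfolding z_def using bounded[OF that] that by (rule measurements_phi_list_nth)
  have interior: "P (map (\<lambda>q. z ! (block_offset Qb M MO q + (m - 1))) [1..<Q + 1]) = PDE_P u (x m)"
    if "m \<in> {1..MO}" for m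
  proof -
    have args: "map (\<lambda>q. z ! (block_offset Qb M MO q + (m - 1))) [1..<Q + 1] = map (\<lambda>q. L q u (x m)) [1..<Q + 1]"
      using that \<open>MO \<le> M\<close> by (intro map_cong refl z_nth) (auto simp: blocksize_def)
    then show ?thesis
      unfolding args using PDE_P_def x_int that by simp
  qed
  have boundary: "B (map (\<lambda>q. z ! (block_offset Qb M MO q + (m - 1))) [1..<Qb + 1]) = PDE_B u (x m)"
    if "m \<in> {MO<..M}" for m
  proof -
    have args: "map (\<lambda>q. z ! (block_offset Qb M MO q + (m - 1))) [1..<Qb + 1] = map (\<lambda>q. L q u (x m)) [1..<Qb + 1]"
      using that \<open>Qb \<le> Q\<close> by (intro map_cong refl z_nth) (auto simp: blocksize_def)
    then show ?thesis
      unfolding args using PDE_B_def x_bdry that by simp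
  qed
  have entry: "((if m \<le> MO then P (map (\<lambda>q. z ! (block_offset Qb M MO q + (m - 1))) [1..<Q + 1])
                 else B (map (\<lambda>q. z ! (block_offset Qb M MO q + (m - 1))) [1..<Qb + 1]))
               = (if m \<le> MO then f (x m) else g (x m)))
      \<longleftrightarrow> (if m \<le> MO then PDE_P u (x m) = f (x m) else PDE_B u (x m) = g (x m))"
    if "m \<in> {1..M}" for m
    using interior[of m] boundary[of m] that by (cases "m \<le> MO") auto
  have "Fmap P B Q Qb M MO z = data_vec f g x M MO \<longleftrightarrow>
      (\<forall>m\<in>{1..M}. if m \<le> MO then PDE_P u (x m) = f (x m) else PDE_B u (x m) = g (x m))"
    unfolding Fmap_def data_vec_def map_eq_conv set_upt
    by (intro ball_cong entry) auto
  also have "\<dots> \<longleftrightarrow> (\<forall>m\<in>{1..MO}. PDE_P u (x m) = f (x m)) \<and> (\<forall>m\<in>{MO<..M}. PDE_B u (x m) = g (x m))"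
    using \<open>MO \<le> M\<close> by auto
  finally show ?thesis
    by (simp add: z_def)
qed

theorem corollary3p5:
  fixes K :: "('u::banach \<Rightarrow>\<^sub>L real) \<Rightarrow> 'u"
    and \<Omega> :: "(real ^ 'd) set"
    and L :: "nat \<Rightarrow> 'u \<Rightarrow> real ^ 'd \<Rightarrow> real"
    and P :: "real list \<Rightarrow> real" and B :: "real list \<Rightarrow> real"
    and PDE_P :: "'u \<Rightarrow> real ^ 'd \<Rightarrow> real" and PDE_B :: "'u \<Rightarrow> real ^ 'd \<Rightarrow> real"
    and f g :: "real ^ 'd \<Rightarrow> real"
    and x :: "nat \<Rightarrow> real ^ 'd"
    and Q Qb M MO :: nat
    and Fbar :: "real list \<Rightarrow> real list \<Rightarrow> real list"
    and u_dag :: 'u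
  assumes separable: "separable_space (euclidean :: 'u topology)"
    and K_linear: "linear K" and K_bij: "bij K"
    and K_symm: "\<forall>\<phi> \<psi>. blinfun_apply \<phi> (K \<psi>) = blinfun_apply \<psi> (K \<phi>)"
    and K_pos: "\<forall>\<phi>. \<phi> \<noteq> 0 \<longrightarrow> blinfun_apply \<phi> (K \<phi>) > 0"
    and norm_K: "\<forall>u. (norm u)\<^sup>2 = blinfun_apply (inv K u) u"
    and bounded_\<Omega>: "bounded \<Omega>"
    and Qb: "1 \<le> Qb" "Qb \<le> Q"
    and L_linear: "\<forall>q\<in>{1..Q}. \<forall>z. linear (\<lambda>u. L q u z)"
    and L_cont: "\<forall>q\<in>{1..Q}. \<forall>u. continuous_on \<Omega> (L q u)"
    and L_bdd: "\<forall>q\<in>{1..Q}. \<exists>C. \<forall>u. \<forall>z\<in>\<Omega>. \<bar>L q u z\<bar> \<le> C * norm u"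
    and L_cont_bdry: "\<forall>q\<in>{1..Qb}. \<forall>u. continuous_on (frontier \<Omega>) (L q u)"
    and L_bdd_bdry: "\<forall>q\<in>{1..Qb}. \<exists>C. \<forall>u. \<forall>z\<in>frontier \<Omega>. \<bar>L q u z\<bar> \<le> C * norm u"
    and PDE_P_def: "\<forall>u. \<forall>z\<in>\<Omega>. PDE_P u z = P (map (\<lambda>q. L q u z) [1..<Q + 1])"
    and PDE_B_def: "\<forall>u. \<forall>z\<in>frontier \<Omega>. PDE_B u z = B (map (\<lambda>q. L q u z) [1..<Qb + 1])"
    and MO_le: "MO \<le> M"
    and x_int: "\<forall>m\<in>{1..MO}. x m \<in> \<Omega>"
    and x_bdry: "\<forall>m\<in>{MO<..M}. x m \<in> frontier \<Omega>"
    and Theta_inv: "invertible_sq_mat (num_meas Q Qb M MO) (Theta K (phi_list L x Q Qb M MO))"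
    and Fbar_range: "\<forall>w v. length w = num_meas Q Qb M MO - M \<longrightarrow> length v = M \<longrightarrow>
                        length (Fbar w v) = num_meas Q Qb M MO"
    and Fbar_param: "\<forall>z. length z = num_meas Q Qb M MO \<longrightarrow>
        (Fmap P B Q Qb M MO z = data_vec f g x M MO \<longleftrightarrow>
          (\<exists>w. length w = num_meas Q Qb M MO - M \<and> z = Fbar w (data_vec f g x M MO)))"
    and Fbar_unique: "\<forall>w w'. length w = num_meas Q Qb M MO - M \<longrightarrow> length w' = num_meas Q Qb M MO - M \<longrightarrow>
        Fbar w (data_vec f g x M MO) = Fbar w' (data_vec f g x M MO) \<longrightarrow> w = w'"
  shows "((\<forall>m\<in>{1..MO}. PDE_P u_dag (x m) = f (x m)) \<and>
          (\<forall>m\<in>{MO<..M}. PDE_B u_dag (x m) = g (x m)) \<and>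
          (\<forall>u. (\<forall>m\<in>{1..MO}. PDE_P u (x m) = f (x m)) \<and>
               (\<forall>m\<in>{MO<..M}. PDE_B u (x m) = g (x m)) \<longrightarrow> norm u_dag \<le> norm u))
     \<longleftrightarrow>
         (\<exists>w_dag. length w_dag = num_meas Q Qb M MO - M \<and>
            (\<forall>w. length w = num_meas Q Qb M MO - M \<longrightarrow>
               quad_form (num_meas Q Qb M MO)
                  (inv_sq_mat (num_meas Q Qb M MO) (Theta K (phi_list L x Q Qb M MO)))
                  (Fbar w_dag (data_vec f g x M MO))
               \<le> quad_form (num_meas Q Qb M MO)
                  (inv_sq_mat (num_meas Q Qb M MO) (Theta K (phi_list L x Q Qb M MO)))
                  (Fbar w (data_vec f g x M MO))) \<and>
            u_dag = (\<Sum>n<num_meas Q Qb M MO.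
                       (Fbar w_dag (data_vec f g x M MO) ! n) *\<^sub>R chi K (phi_list L x Q Qb M MO) n))"
proof -
  let ?N = "num_meas Q Qb M MO" and ?phis = "phi_list L x Q Qb M MO" and ?y = "data_vec f g x M MO"
  define Z where "Z = (\<lambda>w. Fbar w ?y) ` {w. length w = ?N - M}"
  have len_phis: "length ?phis = ?N"
    using Qb(2) by (rule length_phi_list)
  have Theta_inv': "invertible_sq_mat (length ?phis) (Theta K ?phis)"
    using Theta_inv len_phis by simp
  have len_Z: "length z = length ?phis" if "z \<in> Z" for z
    using that Fbar_range len_phis by (auto simp: Z_def data_vec_def)
  have feasible_iff: "((\<forall>m\<in>{1..MO}. PDE_P u (x m) = f (x m)) \<and> (\<forall>m\<in>{MO<..M}. PDE_B u (x m) = g (x m)))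
      \<longleftrightarrow> measurements ?phis u \<in> Z" for u
  proof -
    have "((\<forall>m\<in>{1..MO}. PDE_P u (x m) = f (x m)) \<and> (\<forall>m\<in>{MO<..M}. PDE_B u (x m) = g (x m)))
        \<longleftrightarrow> Fmap P B Q Qb M MO (measurements ?phis u) = ?y"
      using bounded_linear_at_collocation_point[OF L_linear L_bdd L_bdd_bdry x_int x_bdry]
      by (intro collocation_constraints_iff_Fmap[OF Qb(2) MO_le _ PDE_P_def PDE_B_def x_int x_bdry])
    also have "\<dots> \<longleftrightarrow> measurements ?phis u \<in> Z"
      using Fbar_param len_phis by (auto simp: Z_def)
    finally show ?thesis .
  qed
  show ?thesis
    unfolding conj_assoc[symmetric] feasible_iff
    using min_norm_iff_min_quad_form[OF K_linear K_symm Theta_inv' K_bij norm_K len_Z, where u = u_dag]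
    by (simp add: Z_def interpolant_def len_phis)
qed

end
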